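(* Let $x_1<x_2<x_3$ and $y_1<y_2<y_3$ be real numbers and $Z=(z_{ij})\in\mathbb{R}^{3\times 3}$. Put $P_{ij}:=(x_i,y_j,z_{ij})\in\mathbb{R}^3$ for $i,j\in\{1,2,3\}$, and define $A_i:=\operatorname{conv}\{P_{i1},P_{i2},P_{i3}\}$ and $B_j:=\operatorname{conv}\{P_{1j},P_{2j},P_{3j}\}$. Then either there is a line contained in the plane $\{(x_2,s,t): s,t\in\mathbb{R}\}$ intersecting all of $B_1,B_2,B_3$, or there is a line contained in the plane $\{(s,y_2,t): s,t\in\mathbb{R}\}$ intersecting all of $A_1,A_2,A_3$. *)

theory Defs
  imports "HOL-Analysis.Analysis"
begin

definition is_line :: "(real \<times> real \<times> real) set \<Rightarrow> bool" where
  "is_line L \<longleftrightarrow> (\<exists>p v. v \<noteq> 0 \<and> L = {p + t *\<^sub>R v | t. True})"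

end

theory Submission
  imports Defs
begin

text \<open>Let x 2 = lerp (x 1) (x 3) tx and y 2 = lerp (y 1) (y 3) ty. The plane x = x 2 cuts
  B j in the vertical segment over (x 2, y j) from z 2 j to the height w j of the edge P 1 j P 3 j.
  The line through the points of the outer slices (j = 1, 3) at a common parameter t passes over
  (x 2, y 2) at height lerp v M t, where v is the height of the edge P 2 1 P 2 3 there and M is the
  bilinear interpolation of the four corner heights. So a transversal in this plane exists once
  the segment from v to M meets the middle slice, from z 2 2 to w 2. Symmetrically, the plane
  y = y 2 works once the segment from w 2 to M meets the segment from z 2 2 to v, and for real
  numbers one of the two always happens.\<close>

definition lerp :: "'a::real_vector \<Rightarrow> 'a \<Rightarrow> real \<Rightarrow> 'a" where
  "lerp a b u = (1 - u) *\<^sub>R a + u *\<^sub>R b"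

lemma lerp_same [simp]: "lerp a a u = a"
  by (simp add: lerp_def algebra_simps)

lemma lerp_0 [simp]: "lerp a b 0 = a" and lerp_1 [simp]: "lerp a b 1 = b"
  by (simp_all add: lerp_def)

lemma lerp_Pair [simp]: "lerp (a, b) (c, d) u = (lerp a c u, lerp b d u)"
  by (simp add: lerp_def)

lemma lerp_lerp_commute:
  "lerp (lerp a b t) (lerp c d t) u = lerp (lerp a c u) (lerp b d u) t"
  by (simp add: lerp_def algebra_simps)

lemma closed_segment_lerp_iff:
  "p \<in> closed_segment a b \<longleftrightarrow> (\<exists>u\<in>{0..1}. p = lerp a b u)"
  by (auto simp: in_segment lerp_def)

lemma real_between_lerp:
  fixes a b c :: real
  assumes "a \<le> b" "b \<le> c"
  obtains u where "0 \<le> u" "u \<le> 1" "b = lerp a c u"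
  using assms closed_segment_lerp_iff[of b a c] by (auto simp: closed_segment_eq_real_ivl)

lemma lerp_in_closed_segment: "0 \<le> u \<Longrightarrow> u \<le> 1 \<Longrightarrow> lerp a b u \<in> closed_segment a b"
  unfolding closed_segment_lerp_iff by auto

lemma lerp_lerp_in_convex_hull:
  assumes "0 \<le> t" "t \<le> 1" "0 \<le> u" "u \<le> 1"
  shows "lerp b (lerp a c t) u \<in> convex hull {a, b, c}"
proof -
  have "lerp a c t \<in> closed_segment a c"
    using assms(1,2) by (rule lerp_in_closed_segment)
  also have "closed_segment a c \<subseteq> convex hull {a, b, c}"
    by (simp add: closed_segment_subset hull_inc)
  finally have "closed_segment b (lerp a c t) \<subseteq> convex hull {a, b, c}"
    by (simp add: closed_segment_subset hull_inc)
  then show ?thesis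
    using lerp_in_closed_segment[OF assms(3,4)] by blast
qed

lemma closed_segments_meet_or_swap:
  fixes v w m a :: real
  shows "closed_segment v m \<inter> closed_segment a w \<noteq> {} \<or> closed_segment w m \<inter> closed_segment a v \<noteq> {}"
proof -
  have "a \<in> closed_segment v m \<or> v \<in> closed_segment a w \<or> a \<in> closed_segment w m \<or> w \<in> closed_segment a v"
    by (auto simp: closed_segment_eq_real_ivl)
  then show ?thesis
    using ends_in_segment by blast
qed

lemma is_line_lerp_range:
  assumes "p \<noteq> q"
  shows "is_line (range (lerp p q))"
proof -
  have "lerp p q = (\<lambda>t. p + t *\<^sub>R (q - p))"
    by (simp add: fun_eq_iff lerp_def algebra_simps)
  then have "range (lerp p q) = {p + t *\<^sub>R (q - p) | t. True}"
    by (simp add: full_SetCompr_eq)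
  then show ?thesis
    using assms unfolding is_line_def by (metis right_minus_eq)
qed

lemma is_line_linear_image:
  assumes "linear f" "inj f" "is_line L"
  shows "is_line (f ` L)"
proof -
  obtain p v where "v \<noteq> 0" and L: "L = {p + t *\<^sub>R v | t. True}"
    using assms(3) unfolding is_line_def by blast
  have "f v \<noteq> 0"
    using \<open>v \<noteq> 0\<close> assms(1,2) linear_inj_iff_eq_0 by blast
  moreover have "f ` L = {f p + t *\<^sub>R f v | t. True}"
  proof -
    have "L = range (\<lambda>t. p + t *\<^sub>R v)"
      unfolding L by blast
    then show ?thesis
      using assms(1) by (auto simp: image_image linear_add linear_scale)
  qed
  ultimately show ?thesis
    unfolding is_line_def by blast
qed

lemma transversal_in_plane_x:
  fixes x y :: "nat \<Rightarrow> real" and z :: "nat \<Rightarrow> nat \<Rightarrow> real" and tx ty :: real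
  assumes "0 \<le> tx" "tx \<le> 1" "x 2 = lerp (x 1) (x 3) tx"
    and "y 1 \<noteq> y 3" "y 2 = lerp (y 1) (y 3) ty"
    and "closed_segment (lerp (z 2 1) (z 2 3) ty)
           (lerp (lerp (z 1 1) (z 3 1) tx) (lerp (z 1 3) (z 3 3) tx) ty)
         \<inter> closed_segment (z 2 2) (lerp (z 1 2) (z 3 2) tx) \<noteq> {}"
  shows "\<exists>L. is_line L \<and> L \<subseteq> {(x 2, s, t) | s t. True} \<and>
           (\<forall>j\<in>{1,2,3}. L \<inter> convex hull {(x 1, y j, z 1 j), (x 2, y j, z 2 j), (x 3, y j, z 3 j)} \<noteq> {})"
proof -
  define w where "w j = lerp (z 1 j) (z 3 j) tx" for j
  obtain h where h_t: "h \<in> closed_segment (lerp (z 2 1) (z 2 3) ty) (lerp (w 1) (w 3) ty)"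
    and h_s: "h \<in> closed_segment (z 2 2) (w 2)"
    using assms(6) unfolding w_def by blast
  obtain t where t: "0 \<le> t" "t \<le> 1" and "h = lerp (lerp (z 2 1) (z 2 3) ty) (lerp (w 1) (w 3) ty) t"
    using h_t unfolding closed_segment_lerp_iff by auto
  moreover obtain s where s: "0 \<le> s" "s \<le> 1" and "h = lerp (z 2 2) (w 2) s"
    using h_s unfolding closed_segment_lerp_iff by auto
  ultimately have meet: "lerp (lerp (z 2 1) (z 2 3) ty) (lerp (w 1) (w 3) ty) t = lerp (z 2 2) (w 2) s"
    by simp
  have slice: "(x 2, y j, lerp (z 2 j) (w j) u)
      \<in> convex hull {(x 1, y j, z 1 j), (x 2, y j, z 2 j), (x 3, y j, z 3 j)}"
    if "0 \<le> u" "u \<le> 1" for j u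
    using lerp_lerp_in_convex_hull[OF assms(1,2) that,
        where a = "(x 1, y j, z 1 j)" and b = "(x 2, y j, z 2 j)" and c = "(x 3, y j, z 3 j)"]
    by (simp add: w_def assms(3)[symmetric] del: One_nat_def)
  define C where "C j = (x 2, y j, lerp (z 2 j) (w j) t)" for j
  define L where "L = range (lerp (C 1) (C 3))"
  have "is_line L"
    unfolding L_def using assms(4) by (intro is_line_lerp_range) (simp add: C_def)
  moreover have "L \<subseteq> {(x 2, s, t) | s t. True}"
    unfolding L_def C_def by auto
  moreover have "\<forall>j\<in>{1,2,3}.
      L \<inter> convex hull {(x 1, y j, z 1 j), (x 2, y j, z 2 j), (x 3, y j, z 3 j)} \<noteq> {}"
  proof -
    have "C 1 \<in> L" "C 3 \<in> L"
      unfolding L_def by (metis rangeI lerp_0, metis rangeI lerp_1)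
    moreover have "lerp (C 1) (C 3) ty = (x 2, y 2, lerp (z 2 2) (w 2) s)"
      using meet by (simp add: C_def assms(5) lerp_lerp_commute)
    then have "(x 2, y 2, lerp (z 2 2) (w 2) s) \<in> L"
      unfolding L_def by (metis rangeI)
    moreover have "C j \<in> convex hull {(x 1, y j, z 1 j), (x 2, y j, z 2 j), (x 3, y j, z 3 j)}" for j
      unfolding C_def using t by (rule slice)
    ultimately show ?thesis
      using slice[OF s, of 2] by blast
  qed
  ultimately show ?thesis
    by blast
qed

definition swap_xy :: "real \<times> real \<times> real \<Rightarrow> real \<times> real \<times> real" where
  "swap_xy = (\<lambda>(a, b, c). (b, a, c))"

lemma linear_swap_xy: "linear swap_xy"
  by (auto simp: linear_iff swap_xy_def split: prod.splits)

lemma inj_swap_xy: "inj swap_xy"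
  by (auto simp: inj_def swap_xy_def)

lemma transversal_in_plane_y:
  fixes x y :: "nat \<Rightarrow> real" and z :: "nat \<Rightarrow> nat \<Rightarrow> real" and tx ty :: real
  assumes "0 \<le> ty" "ty \<le> 1" "y 2 = lerp (y 1) (y 3) ty"
    and "x 1 \<noteq> x 3" "x 2 = lerp (x 1) (x 3) tx"
    and "closed_segment (lerp (z 1 2) (z 3 2) tx)
           (lerp (lerp (z 1 1) (z 3 1) tx) (lerp (z 1 3) (z 3 3) tx) ty)
         \<inter> closed_segment (z 2 2) (lerp (z 2 1) (z 2 3) ty) \<noteq> {}"
  shows "\<exists>L. is_line L \<and> L \<subseteq> {(s, y 2, t) | s t. True} \<and>
           (\<forall>i\<in>{1,2,3}. L \<inter> convex hull {(x i, y 1, z i 1), (x i, y 2, z i 2), (x i, y 3, z i 3)} \<noteq> {})"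
proof -
  have M: "lerp (lerp (z 1 1) (z 3 1) tx) (lerp (z 1 3) (z 3 3) tx) ty
      = lerp (lerp (z 1 1) (z 1 3) ty) (lerp (z 3 1) (z 3 3) ty) tx"
    by (rule lerp_lerp_commute)
  obtain L where L: "is_line L" "L \<subseteq> {(y 2, s, t) | s t. True}"
    and meets: "\<forall>i\<in>{1,2,3}.
      L \<inter> convex hull {(y 1, x i, z i 1), (y 2, x i, z i 2), (y 3, x i, z i 3)} \<noteq> {}"
    using transversal_in_plane_x[where x = y and y = x and z = "\<lambda>i j. z j i" and tx = ty and ty = tx,
        OF assms(1-5) assms(6)[unfolded M]] by blast
  have hull: "swap_xy ` (convex hull {(y 1, x i, z i 1), (y 2, x i, z i 2), (y 3, x i, z i 3)})
      = convex hull {(x i, y 1, z i 1), (x i, y 2, z i 2), (x i, y 3, z i 3)}" for i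
    unfolding convex_hull_linear_image[OF linear_swap_xy] by (simp add: swap_xy_def)
  have "is_line (swap_xy ` L)"
    using is_line_linear_image linear_swap_xy inj_swap_xy L(1) by blast
  moreover have "swap_xy ` L \<subseteq> {(s, y 2, t) | s t. True}"
  proof
    fix q
    assume "q \<in> swap_xy ` L"
    then obtain s t where "q = swap_xy (y 2, s, t)"
      using L(2) by blast
    then show "q \<in> {(s, y 2, t) | s t. True}"
      by (simp add: swap_xy_def)
  qed
  moreover have "swap_xy ` L
      \<inter> convex hull {(x i, y 1, z i 1), (x i, y 2, z i 2), (x i, y 3, z i 3)} \<noteq> {}"
    if "i \<in> {1,2,3}" for i
    using meets that hull[of i] image_Int[OF inj_swap_xy] by (metis image_is_empty)
  ultimately show ?thesis
    by blast
qed

theorem lemma3: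
  fixes x y :: "nat \<Rightarrow> real" and z :: "nat \<Rightarrow> nat \<Rightarrow> real"
    and P :: "nat \<Rightarrow> nat \<Rightarrow> real \<times> real \<times> real"
    and A B :: "nat \<Rightarrow> (real \<times> real \<times> real) set"
  assumes "x 1 < x 2" "x 2 < x 3" "y 1 < y 2" "y 2 < y 3"
    and "\<And>i j. P i j = (x i, y j, z i j)"
    and "\<And>i. A i = convex hull {P i 1, P i 2, P i 3}"
    and "\<And>j. B j = convex hull {P 1 j, P 2 j, P 3 j}"
  shows "(\<exists>L. is_line L \<and> L \<subseteq> {(x 2, s, t) | s t. True} \<and>
            (\<forall>j\<in>{1,2,3}. L \<inter> B j \<noteq> {}))
       \<or> (\<exists>L. is_line L \<and> L \<subseteq> {(s, y 2, t) | s t. True} \<and>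
            (\<forall>i\<in>{1,2,3}. L \<inter> A i \<noteq> {}))"
proof -
  obtain tx where tx: "0 \<le> tx" "tx \<le> 1" "x 2 = lerp (x 1) (x 3) tx"
    by (rule real_between_lerp[of "x 1" "x 2" "x 3"]) (use assms(1,2) in auto)
  obtain ty where ty: "0 \<le> ty" "ty \<le> 1" "y 2 = lerp (y 1) (y 3) ty"
    by (rule real_between_lerp[of "y 1" "y 2" "y 3"]) (use assms(3,4) in auto)
  have "x 1 \<noteq> x 3" "y 1 \<noteq> y 3"
    using assms(1-4) by auto
  have AB: "\<And>i. A i = convex hull {(x i, y 1, z i 1), (x i, y 2, z i 2), (x i, y 3, z i 3)}"
    "\<And>j. B j = convex hull {(x 1, y j, z 1 j), (x 2, y j, z 2 j), (x 3, y j, z 3 j)}"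
    by (simp_all add: assms(5-7))
  show ?thesis
    unfolding AB
    using closed_segments_meet_or_swap[where v = "lerp (z 2 1) (z 2 3) ty" and w = "lerp (z 1 2) (z 3 2) tx"
        and m = "lerp (lerp (z 1 1) (z 3 1) tx) (lerp (z 1 3) (z 3 3) tx) ty" and a = "z 2 2"]
    by (elim disj_forward)
      (fact transversal_in_plane_x[OF tx \<open>y 1 \<noteq> y 3\<close> ty(3)]
        transversal_in_plane_y[OF ty \<open>x 1 \<noteq> x 3\<close> tx(3)])+
qed

end
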